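(* If $f:[-1,1]\to\mathbb{R}$ is continuous, then the set of sequential cord derivatives of $f$ at $0$ is either the empty set, a single point, or a closed interval in $\overline{\mathbb{R}}$.
   Context: $\overline{\mathbb{R}}=\mathbb{R}\cup\{\pm\infty\}$. $L\in\overline{\mathbb{R}}$ is a sequential cord derivative of $f$ at $0$ if there are sequences $h_n>0$, $k_n>0$ in $[-1,1]$ with $h_n\to0$, $k_n\to0$, and $\frac{f(h_n)-f(-k_n)}{h_n+k_n}\to L$ as $n\to\infty$. A closed interval in $\overline{\mathbb{R}}$ is a set $[a,b]=\{t\in\overline{\mathbb{R}}:a\le t\le b\}$ with $a<b$ in $\overline{\mathbb{R}}$. *)

theory Defs
  imports "HOL-Analysis.Analysis"
begin

definition seq_cord_deriv :: "(real \<Rightarrow> real) \<Rightarrow> ereal \<Rightarrow> bool" where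
  "seq_cord_deriv f L \<longleftrightarrow>
     (\<exists>h k :: nat \<Rightarrow> real.
        (\<forall>n. 0 < h n \<and> h n \<le> 1 \<and> 0 < k n \<and> k n \<le> 1) \<and>
        h \<longlonglongrightarrow> 0 \<and> k \<longlonglongrightarrow> 0 \<and>
        (\<lambda>n. ereal ((f (h n) - f (- k n)) / (h n + k n))) \<longlonglongrightarrow> L)"

definition seq_cord_derivs :: "(real \<Rightarrow> real) \<Rightarrow> ereal set" where
  "seq_cord_derivs f = {L. seq_cord_deriv f L}"

end

theory Submission
  imports Defs
begin

text \<open>Two facts make the set of sequential cord derivatives an interval. First, it is the set
  of cluster values of the cord quotient as both endpoints shrink to 0, and a set of cluster
  values is closed. Second, it is order-convex: the cord quotient is continuous on the connected
  square \<open>(0,\<delta>] \<times> (0,\<delta>]\<close>, so any value lying between quotients attained in arbitrarily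
  small squares is itself attained in arbitrarily small squares. A nonempty closed order-convex
  subset of the extended reals is a point or a closed interval.\<close>

definition cord_quotient :: "(real \<Rightarrow> real) \<Rightarrow> real \<Rightarrow> real \<Rightarrow> real" where
  "cord_quotient f h k = (f h - f (- k)) / (h + k)"

definition cord_cluster_point :: "(real \<Rightarrow> real) \<Rightarrow> ereal \<Rightarrow> bool" where
  "cord_cluster_point f L \<longleftrightarrow>
     (\<forall>U \<delta>. open U \<longrightarrow> L \<in> U \<longrightarrow> 0 < \<delta> \<longrightarrow>
        (\<exists>h \<in> {0<..min \<delta> 1}. \<exists>k \<in> {0<..min \<delta> 1}. ereal (cord_quotient f h k) \<in> U))"

lemma seq_cord_deriv_imp_cord_cluster_point:
  assumes "seq_cord_deriv f L"
  shows "cord_cluster_point f L"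
  unfolding cord_cluster_point_def
proof (intro allI impI)
  fix U \<delta> assume U: "open U" "L \<in> U" and "(0::real) < \<delta>"
  from assms obtain h k where hk: "\<And>n. 0 < h n \<and> h n \<le> 1 \<and> 0 < k n \<and> k n \<le> 1"
    and "h \<longlonglongrightarrow> 0" "k \<longlonglongrightarrow> 0"
    and q: "(\<lambda>n. ereal (cord_quotient f (h n) (k n))) \<longlonglongrightarrow> L"
    unfolding seq_cord_deriv_def cord_quotient_def by blast
  have "eventually (\<lambda>n. ereal (cord_quotient f (h n) (k n)) \<in> U \<and> h n < \<delta> \<and> k n < \<delta>) sequentially"
    using topological_tendstoD[OF q U] order_tendstoD(2)[OF \<open>h \<longlonglongrightarrow> 0\<close> \<open>0 < \<delta>\<close>]
      order_tendstoD(2)[OF \<open>k \<longlonglongrightarrow> 0\<close> \<open>0 < \<delta>\<close>]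
    by eventually_elim auto
  then obtain n where "ereal (cord_quotient f (h n) (k n)) \<in> U" "h n < \<delta>" "k n < \<delta>"
    using eventually_sequentially by auto
  with hk[of n] show "\<exists>h \<in> {0<..min \<delta> 1}. \<exists>k \<in> {0<..min \<delta> 1}. ereal (cord_quotient f h k) \<in> U"
    by (intro bexI[of _ "h n"] bexI[of _ "k n"]) auto
qed

lemma cord_cluster_point_imp_seq_cord_deriv:
  assumes "cord_cluster_point f L"
  shows "seq_cord_deriv f L"
proof -
  obtain A :: "nat \<Rightarrow> ereal set" where A: "\<And>n. open (A n)" "\<And>n. L \<in> A n"
    "\<And>U. open U \<Longrightarrow> L \<in> U \<Longrightarrow> eventually (\<lambda>n. A n \<subseteq> U) sequentially"
    using countable_basis_at_decseq[of L] by blast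
  have "\<exists>h \<in> {0<..1 / Suc n}. \<exists>k \<in> {0<..1 / Suc n}. ereal (cord_quotient f h k) \<in> A n" for n
    using assms[unfolded cord_cluster_point_def, rule_format, OF A(1,2), of "1 / Suc n" n]
    by simp
  then obtain h k where hk: "\<And>n. h n \<in> {0<..1 / Suc n}" "\<And>n. k n \<in> {0<..1 / Suc n}"
    and q: "\<And>n. ereal (cord_quotient f (h n) (k n)) \<in> A n"
    by metis
  have to_0: "g \<longlonglongrightarrow> 0" if "\<And>n. g n \<in> {0<..1 / Suc n}" for g :: "nat \<Rightarrow> real"
    by (rule tendsto_sandwich[of "\<lambda>_. 0" _ _ "\<lambda>n. 1 / Suc n"])
       (use that LIMSEQ_Suc[OF lim_inverse_n'] in \<open>auto intro!: always_eventually less_imp_le\<close>)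
  have "(\<lambda>n. ereal (cord_quotient f (h n) (k n))) \<longlonglongrightarrow> L"
  proof (rule topological_tendstoI)
    fix U assume "open U" "L \<in> U"
    from A(3)[OF this] show "eventually (\<lambda>n. ereal (cord_quotient f (h n) (k n)) \<in> U) sequentially"
      by eventually_elim (use q in auto)
  qed
  moreover have "h n \<le> 1" "k n \<le> 1" for n
    using hk[of n] order_trans[of _ "1 / Suc n" 1] by auto
  ultimately show ?thesis
    using hk to_0[OF hk(1)] to_0[OF hk(2)] unfolding seq_cord_deriv_def cord_quotient_def
    by (intro exI[of _ h] exI[of _ k]) auto
qed

lemma seq_cord_deriv_iff_cord_cluster_point:
  "seq_cord_deriv f L \<longleftrightarrow> cord_cluster_point f L"
  using seq_cord_deriv_imp_cord_cluster_point cord_cluster_point_imp_seq_cord_deriv by blast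

lemma closed_seq_cord_derivs: "closed (seq_cord_derivs f)"
proof -
  have "L \<in> seq_cord_derivs f" if L: "L \<in> closure (seq_cord_derivs f)" for L
  proof -
    have "cord_cluster_point f L"
      unfolding cord_cluster_point_def
    proof (intro allI impI)
      fix U \<delta> assume U: "open U" "L \<in> U" and "(0::real) < \<delta>"
      from L U obtain L' where "L' \<in> U" "seq_cord_deriv f L'"
        using open_Int_closure_eq_empty[OF U(1)] unfolding seq_cord_derivs_def by blast
      with U \<open>0 < \<delta>\<close> show "\<exists>h \<in> {0<..min \<delta> 1}. \<exists>k \<in> {0<..min \<delta> 1}. ereal (cord_quotient f h k) \<in> U"
        unfolding seq_cord_deriv_iff_cord_cluster_point cord_cluster_point_def by blast
    qed
    then show ?thesis
      unfolding seq_cord_derivs_def seq_cord_deriv_iff_cord_cluster_point by simp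
  qed
  then show ?thesis
    using closure_subset_eq by blast
qed

lemma cord_quotient_intermediate_value:
  assumes f: "continuous_on {-1..1} f" and "c \<le> 1"
    and "h \<in> {0<..c}" "k \<in> {0<..c}" "h' \<in> {0<..c}" "k' \<in> {0<..c}"
    and "cord_quotient f h k \<le> m" "m \<le> cord_quotient f h' k'"
  shows "\<exists>h'' \<in> {0<..c}. \<exists>k'' \<in> {0<..c}. cord_quotient f h'' k'' = m"
proof -
  let ?Q = "{0<..c} \<times> {0<..c}" and ?q = "\<lambda>p. cord_quotient f (fst p) (snd p)"
  have "continuous_on ?Q (\<lambda>p. f (fst p))" "continuous_on ?Q (\<lambda>p. f (- snd p))"
    using \<open>c \<le> 1\<close> by (auto intro!: continuous_on_compose2[OF f] continuous_intros)
  then have "continuous_on ?Q ?q"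
    unfolding cord_quotient_def by (auto intro!: continuous_intros simp: add_pos_pos)
  then have "connected (?q ` ?Q)"
    by (intro connected_continuous_image connected_Times) auto
  moreover have "cord_quotient f h k \<in> ?q ` ?Q"
    using assms(3,4) by (auto intro!: rev_image_eqI[of "(h, k)"])
  moreover have "cord_quotient f h' k' \<in> ?q ` ?Q"
    using assms(5,6) by (auto intro!: rev_image_eqI[of "(h', k')"])
  ultimately have "m \<in> ?q ` ?Q"
    using assms(7,8) unfolding connected_iff_interval by blast
  then show ?thesis by force
qed

lemma seq_cord_deriv_between:
  assumes f: "continuous_on {-1..1} f"
    and "seq_cord_deriv f L\<^sub>1" "seq_cord_deriv f L\<^sub>2" "L\<^sub>1 < M" "M < L\<^sub>2"
  shows "seq_cord_deriv f M"
proof -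
  obtain m where M: "M = ereal m"
    using assms(4,5) by (cases M) auto
  have "cord_cluster_point f M"
    unfolding cord_cluster_point_def
  proof (intro allI impI)
    fix U \<delta> assume "open U" "M \<in> U" "(0::real) < \<delta>"
    obtain h k where hk: "h \<in> {0<..min \<delta> 1}" "k \<in> {0<..min \<delta> 1}" "ereal (cord_quotient f h k) < M"
      using assms(2)[unfolded seq_cord_deriv_iff_cord_cluster_point cord_cluster_point_def,
          rule_format, of "{..<M}" \<delta>] assms(4) \<open>0 < \<delta>\<close>
      by auto
    obtain h' k' where hk': "h' \<in> {0<..min \<delta> 1}" "k' \<in> {0<..min \<delta> 1}" "M < ereal (cord_quotient f h' k')"
      using assms(3)[unfolded seq_cord_deriv_iff_cord_cluster_point cord_cluster_point_def,
          rule_format, of "{M<..}" \<delta>] assms(5) \<open>0 < \<delta>\<close>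
      by auto
    from hk hk' M have "\<exists>h'' \<in> {0<..min \<delta> 1}. \<exists>k'' \<in> {0<..min \<delta> 1}. cord_quotient f h'' k'' = m"
      by (intro cord_quotient_intermediate_value[OF f, of _ h k h' k']) auto
    with \<open>M \<in> U\<close> M show "\<exists>h \<in> {0<..min \<delta> 1}. \<exists>k \<in> {0<..min \<delta> 1}. ereal (cord_quotient f h k) \<in> U"
      by auto
  qed
  then show ?thesis
    by (simp add: seq_cord_deriv_iff_cord_cluster_point)
qed

lemma closed_order_convex_eq_Icc:
  fixes S :: "'a::{complete_linorder, linorder_topology, second_countable_topology} set"
  assumes "closed S" "S \<noteq> {}"
    and between: "\<And>x y z. x \<in> S \<Longrightarrow> y \<in> S \<Longrightarrow> x < z \<Longrightarrow> z < y \<Longrightarrow> z \<in> S"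
  shows "S = {Inf S..Sup S}"
proof
  show "S \<subseteq> {Inf S..Sup S}"
    by (auto intro: Inf_lower Sup_upper)
  have "Inf S \<in> S" "Sup S \<in> S"
    using closed_contains_Inf_cl closed_contains_Sup_cl assms(1,2) by blast+
  show "{Inf S..Sup S} \<subseteq> S"
  proof
    fix x assume "x \<in> {Inf S..Sup S}"
    then consider "x = Inf S" | "x = Sup S" | "Inf S < x \<and> x < Sup S"
      by (auto simp: le_less)
    then show "x \<in> S"
      by cases (use \<open>Inf S \<in> S\<close> \<open>Sup S \<in> S\<close> between in blast)+
  qed
qed

theorem theorem3p5:
  fixes f :: "real \<Rightarrow> real"
  assumes "continuous_on {-1..1} f"
  shows "seq_cord_derivs f = {} \<or> (\<exists>a. seq_cord_derivs f = {a}) \<or>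
         (\<exists>a b :: ereal. a < b \<and> seq_cord_derivs f = {a..b})"
proof (cases "seq_cord_derivs f = {}")
  case False
  let ?a = "Inf (seq_cord_derivs f)" and ?b = "Sup (seq_cord_derivs f)"
  have Icc: "seq_cord_derivs f = {?a..?b}"
    using closed_order_convex_eq_Icc[OF closed_seq_cord_derivs False]
      seq_cord_deriv_between[OF assms] unfolding seq_cord_derivs_def by blast
  show ?thesis
  proof (cases "?a < ?b")
    case False
    moreover have "?a \<le> ?b"
      using Icc \<open>seq_cord_derivs f \<noteq> {}\<close> by (metis atLeastatMost_empty_iff)
    ultimately have "seq_cord_derivs f = {?a}"
      using Icc by simp
    then show ?thesis by blast
  qed (use Icc in blast)
qed simp

end
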